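(* Let $\mathrm{UB}(m,k):=m(m-1)+mk$. There exists a parameter-free robust algorithm for the Discriminative Feature Feedback protocol described in the context (i.e., one that receives no input parameters) such that, for every $m,k$ and every input stream that is consistent with some representation of size $m$ with at most $k$ exceptions, the algorithm makes at most \[32\,\mathrm{UB}(m,k)\log^2\big(8\,\mathrm{UB}(m,k)\big) = \tilde{O}(m^2+mk)\] mistakes.
   Context: Setting. Let $\mathcal{X}$ be a domain of examples, $\mathcal{Y}$ a finite set of labels, and $\Phi$ a (possibly infinite, not necessarily known to the learner) set of binary features $\phi:\mathcal{X}\to\{\texttt{true},\texttt{false}\}$, closed under negation. A representation of size $m$ is a family $\mathcal{G}=\{G_1,\dots,G_m\}$ of subsets (components) of $\mathcal{X}$ with $\mathcal{X}=\bigcup_i G_i$; each component $G$ has a label $\ell(G)\in\mathcal{Y}$; for each $x$ a fixed component $G(x)\ni x$ is chosen, and the target concept is $c^*(x)=\ell(G(x))$. For any two components $G_i,G_j$ with $\ell(G_i)\neq\ell(G_j)$ there is a discriminative feature $\phi(G_i,G_j)\in\Phi$ true on every $x\in G_i$ and false on every $x\in G_j$, with $\phi(G_j,G_i)=\neg\phi(G_i,G_j)$. Protocol. The learner first receives an example $x_0$ with its label $y_0$. Then in each round: an example $x_t$ arrives; the learner predicts a label $\hat y_t$ together with an explanation $\hat x_t$, an example previously observed with label $\hat y_t$; if the prediction is correct no feedback is given; if it is incorrect (a mistake), the teacher provides $y_t=c^*(x_t)$ and the feature $\phi(G(x_t),G(\hat x_t))$. An example is an exception if the teacher's feedback on it is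 inconsistent with the representation and the protocol. The stream is consistent with a representation of size $m$ with at most $k$ exceptions if some such representation exists for which all feedback conforms to the protocol except on at most $k$ examples; the stream is otherwise arbitrary. *)

theory Defs
  imports Complex_Main
begin

text \<open>Teacher feedback in a round: None = no feedback (prediction accepted as correct);
  Some (y, phi) = mistake, with correct label y and discriminative feature phi.\<close>
type_synonym ('x, 'y) feedback = "('y \<times> ('x \<Rightarrow> bool)) option"

text \<open>A (deterministic, parameter-free) learner: given the initial labelled example (x0, y0),
  the history of previous rounds (example, feedback) and the current example, it outputs
  a predicted label together with an explanation example.\<close>
type_synonym ('x, 'y) learner =
  "'x \<Rightarrow> 'y \<Rightarrow> ('x \<times> ('x, 'y) feedback) list \<Rightarrow> 'x \<Rightarrow> 'y \<times> 'x"

definition pred :: "('x, 'y) learner \<Rightarrow> 'x \<Rightarrow> 'y \<Rightarrow> ('x \<times> ('x, 'y) feedback) list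
    \<Rightarrow> nat \<Rightarrow> 'y \<times> 'x" where
  "pred L x0 y0 rs i = L x0 y0 (take i rs) (fst (rs ! i))"

definition observed :: "('x, 'y) learner \<Rightarrow> 'x \<Rightarrow> 'y \<Rightarrow> ('x \<times> ('x, 'y) feedback) list
    \<Rightarrow> nat \<Rightarrow> ('x \<times> 'y) set" where
  "observed L x0 y0 rs i = insert (x0, y0)
     {(fst (rs ! j), (case snd (rs ! j) of None \<Rightarrow> fst (pred L x0 y0 rs j) | Some (y, _) \<Rightarrow> y)) | j. j < i}"

definition valid_explanations :: "('x, 'y) learner \<Rightarrow> bool" where
  "valid_explanations L \<longleftrightarrow> (\<forall>x0 y0 rs i. i < length rs \<longrightarrow>
     (snd (pred L x0 y0 rs i), fst (pred L x0 y0 rs i)) \<in> observed L x0 y0 rs i)"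

definition neg_closed :: "('x \<Rightarrow> bool) set \<Rightarrow> bool" where
  "neg_closed Phi \<longleftrightarrow> (\<forall>\<phi>\<in>Phi. (\<lambda>x. \<not> \<phi> x) \<in> Phi)"

text \<open>A representation of size m: components G 0, ..., G (m-1), labels lab, the chosen component
  sel x (with x in G (sel x), so the components cover the domain), and discriminative
  features phi i j in Phi for components with distinct labels.\<close>
definition is_representation :: "('x \<Rightarrow> bool) set \<Rightarrow> nat \<Rightarrow> (nat \<Rightarrow> 'x set) \<Rightarrow> (nat \<Rightarrow> 'y)
    \<Rightarrow> ('x \<Rightarrow> nat) \<Rightarrow> (nat \<Rightarrow> nat \<Rightarrow> ('x \<Rightarrow> bool)) \<Rightarrow> bool" where
  "is_representation Phi m G lab sel phi \<longleftrightarrow>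
     (\<forall>x. sel x < m \<and> x \<in> G (sel x)) \<and>
     (\<forall>i<m. \<forall>j<m. lab i \<noteq> lab j \<longrightarrow>
        phi i j \<in> Phi \<and> (\<forall>x\<in>G i. phi i j x) \<and> (\<forall>x\<in>G j. \<not> phi i j x) \<and>
        phi j i = (\<lambda>x. \<not> phi i j x))"

text \<open>Round i conforms to the protocol w.r.t. the representation (target c*(x) = lab (sel x)).\<close>
definition conforms :: "('x, 'y) learner \<Rightarrow> 'x \<Rightarrow> 'y \<Rightarrow> ('x \<times> ('x, 'y) feedback) list
    \<Rightarrow> (nat \<Rightarrow> 'y) \<Rightarrow> ('x \<Rightarrow> nat) \<Rightarrow> (nat \<Rightarrow> nat \<Rightarrow> ('x \<Rightarrow> bool)) \<Rightarrow> nat \<Rightarrow> bool" where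
  "conforms L x0 y0 rs lab sel phi i \<longleftrightarrow>
     (let x = fst (rs ! i); yh = fst (pred L x0 y0 rs i); xh = snd (pred L x0 y0 rs i) in
      case snd (rs ! i) of
        None \<Rightarrow> yh = lab (sel x)
      | Some (y, f) \<Rightarrow> yh \<noteq> lab (sel x) \<and> y = lab (sel x) \<and>
                       lab (sel x) \<noteq> lab (sel xh) \<and> f = phi (sel x) (sel xh))"

definition num_exceptions :: "('x, 'y) learner \<Rightarrow> 'x \<Rightarrow> 'y \<Rightarrow> ('x \<times> ('x, 'y) feedback) list
    \<Rightarrow> (nat \<Rightarrow> 'y) \<Rightarrow> ('x \<Rightarrow> nat) \<Rightarrow> (nat \<Rightarrow> nat \<Rightarrow> ('x \<Rightarrow> bool)) \<Rightarrow> nat" where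
  "num_exceptions L x0 y0 rs lab sel phi =
     (if y0 = lab (sel x0) then 0 else 1) +
     card {i. i < length rs \<and> \<not> conforms L x0 y0 rs lab sel phi i}"

definition consistent_stream :: "('x \<Rightarrow> bool) set \<Rightarrow> nat \<Rightarrow> nat \<Rightarrow> ('x, 'y) learner
    \<Rightarrow> 'x \<Rightarrow> 'y \<Rightarrow> ('x \<times> ('x, 'y) feedback) list \<Rightarrow> bool" where
  "consistent_stream Phi m k L x0 y0 rs \<longleftrightarrow>
     (\<exists>G lab sel phi. is_representation Phi m G lab sel phi \<and>
        num_exceptions L x0 y0 rs lab sel phi \<le> k)"

definition mistakes :: "('x \<times> ('x, 'y) feedback) list \<Rightarrow> nat" where
  "mistakes rs = card {i. i < length rs \<and> snd (rs ! i) \<noteq> None}"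

definition UB :: "nat \<Rightarrow> nat \<Rightarrow> nat" where
  "UB m k = m * (m - 1) + m * k"

end

theory Submission
  imports Defs
begin

text \<open>
  The learner keeps a list of prototypes, each an observed example (its anchor) with a label and a
  conjunction of features. It predicts with the first prototype whose features hold on the new
  example, falling back to the initial example. After a mistake it adds the negated teacher feature
  to that prototype and, unless some prototype now covers the example with the correct label,
  appends the example as a new prototype. The learner does not depend on \<open>Phi\<close>.

  Fix a representation with \<open>m\<close> components. Call a prototype honest if its label is that of its
  anchor's component and it covers that whole component. A conforming mistake either rules out,
  for the responsible prototype, one more of the at most \<open>m - 1\<close> other components, or adds an
  honest prototype for a component that had none; honesty is never destroyed. So it raises the
  potential (ruled-out components summed over the prototypes, plus the components that have an
  honest prototype), while an exception lowers it by at most one and adds at most one dishonest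
  prototype. Hence there are at
  most \<open>1 + m + 2e\<close> prototypes and at most \<open>(m - 1)(1 + m + 2e) + m + 2e \<le> 3 UB(m, k)\<close>
  mistakes, which is below the claimed bound.
\<close>

datatype ('x, 'y) prototype =
  Prototype (anchor: 'x) (plabel: 'y) (features: "('x \<Rightarrow> bool) list")

definition covers :: "('x, 'y) prototype \<Rightarrow> 'x \<Rightarrow> bool" where
  "covers p z \<longleftrightarrow> (\<forall>f \<in> set (features p). f z)"

fun predict :: "'y \<times> 'x \<Rightarrow> ('x, 'y) prototype list \<Rightarrow> 'x \<Rightarrow> 'y \<times> 'x" where
  "predict d [] z = d"
| "predict d (p # S) z = (if covers p z then (plabel p, anchor p) else predict d S z)"

definition exclude :: "('x \<Rightarrow> bool) \<Rightarrow> ('x, 'y) prototype \<Rightarrow> ('x, 'y) prototype" where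
  "exclude \<phi> p = Prototype (anchor p) (plabel p) ((\<lambda>w. \<not> \<phi> w) # features p)"

lemma anchor_exclude [simp]: "anchor (exclude \<phi> p) = anchor p"
  and plabel_exclude [simp]: "plabel (exclude \<phi> p) = plabel p"
  by (simp_all add: exclude_def)

fun refine :: "('x \<Rightarrow> bool) \<Rightarrow> 'x \<Rightarrow> ('x, 'y) prototype list \<Rightarrow> ('x, 'y) prototype list" where
  "refine \<phi> z [] = []"
| "refine \<phi> z (p # S) = (if covers p z then exclude \<phi> p # S else p # refine \<phi> z S)"

definition admit :: "'x \<Rightarrow> 'y \<Rightarrow> ('x, 'y) prototype list \<Rightarrow> ('x, 'y) prototype list" where
  "admit x y S = (if \<exists>p \<in> set S. covers p x \<and> plabel p = y then S else S @ [Prototype x y []])"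

fun update :: "('x, 'y) prototype list \<Rightarrow> 'x \<times> ('x, 'y) feedback \<Rightarrow> ('x, 'y) prototype list" where
  "update S (x, None) = S"
| "update S (x, Some (y, \<phi>)) = admit x y (refine \<phi> x S)"

definition prototypes :: "'x \<Rightarrow> 'y \<Rightarrow> ('x \<times> ('x, 'y) feedback) list \<Rightarrow> ('x, 'y) prototype list" where
  "prototypes x0 y0 h = foldl update [Prototype x0 y0 []] h"

definition prototype_learner :: "('x, 'y) learner" where
  "prototype_learner x0 y0 h z = predict (y0, x0) (prototypes x0 y0 h) z"

abbreviation labelled_anchor :: "('x, 'y) prototype \<Rightarrow> 'x \<times> 'y" where
  "labelled_anchor p \<equiv> (anchor p, plabel p)"

lemma prototypes_take_Suc:
  "i < length rs \<Longrightarrow> prototypes x0 y0 (take (Suc i) rs) = update (prototypes x0 y0 (take i rs)) (rs ! i)"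
  by (simp add: prototypes_def take_Suc_conv_app_nth)

lemma pred_prototype_learner:
  "pred prototype_learner x0 y0 rs i = predict (y0, x0) (prototypes x0 y0 (take i rs)) (fst (rs ! i))"
  by (simp add: pred_def prototype_learner_def)

lemma predict_cases: "predict d S z = d \<or> (\<exists>p \<in> set S. predict d S z = (plabel p, anchor p))"
  by (induction S) auto

lemma refine_split:
  assumes "\<exists>p \<in> set S. covers p z"
  obtains S1 p S2 where "S = S1 @ p # S2" "covers p z"
    "predict d S z = (plabel p, anchor p)" "refine \<phi> z S = S1 @ exclude \<phi> p # S2"
  using assms
proof (induction S arbitrary: thesis)
  case Nil
  then show ?case by simp
next
  case (Cons q S)
  show ?case
  proof (cases "covers q z")
    case True
    then show ?thesis by (intro Cons.prems(1)[of "[]" q S]) auto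
  next
    case False
    then obtain S1 p S2 where "S = S1 @ p # S2" "covers p z"
      "predict d S z = (plabel p, anchor p)" "refine \<phi> z S = S1 @ exclude \<phi> p # S2"
      using Cons.IH Cons.prems(2) by auto
    with False show ?thesis by (intro Cons.prems(1)[of "q # S1" p S2]) auto
  qed
qed

lemma refine_no_cover: "\<forall>p \<in> set S. \<not> covers p z \<Longrightarrow> refine \<phi> z S = S"
  by (induction S) auto

lemma length_refine [simp]: "length (refine \<phi> z S) = length S"
  by (induction S) auto

lemma anchor_labels_refine: "labelled_anchor ` set (refine \<phi> z S) = labelled_anchor ` set S"
  by (induction S) auto

lemma anchor_labels_update:
  "labelled_anchor ` set (update S (x, fb)) \<subseteq>
     labelled_anchor ` set S \<union> {(x, y) | y \<phi>. fb = Some (y, \<phi>)}"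
proof (cases fb)
  case (Some fb')
  then obtain y \<phi> where fb: "fb = Some (y, \<phi>)"
    by (cases fb') auto
  then have "set (update S (x, fb)) \<subseteq> insert (Prototype x y []) (set (refine \<phi> x S))"
    by (auto simp: admit_def)
  then show ?thesis
    using fb anchor_labels_refine[of \<phi> x S] by fastforce
qed simp

lemma anchor_labels_observed:
  "i \<le> length rs \<Longrightarrow>
     labelled_anchor ` set (prototypes x0 y0 (take i rs)) \<subseteq> observed L x0 y0 rs i"
proof (induction i)
  case 0
  then show ?case by (simp add: prototypes_def observed_def)
next
  case (Suc i)
  obtain x fb where r: "rs ! i = (x, fb)"
    by (cases "rs ! i")
  have "labelled_anchor ` set (prototypes x0 y0 (take (Suc i) rs)) \<subseteq>
      labelled_anchor ` set (prototypes x0 y0 (take i rs)) \<union> {(x, y) | y \<phi>. fb = Some (y, \<phi>)}"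
    using Suc.prems r anchor_labels_update by (simp add: prototypes_take_Suc)
  also have "\<dots> \<subseteq> observed L x0 y0 rs (Suc i)"
  proof (rule Un_least)
    have "observed L x0 y0 rs i \<subseteq> observed L x0 y0 rs (Suc i)"
      unfolding observed_def by fastforce
    with Suc show "labelled_anchor ` set (prototypes x0 y0 (take i rs)) \<subseteq> observed L x0 y0 rs (Suc i)"
      by simp
    show "{(x, y) | y \<phi>. fb = Some (y, \<phi>)} \<subseteq> observed L x0 y0 rs (Suc i)"
      using r unfolding observed_def by (auto intro!: exI[of _ i])
  qed
  finally show ?case .
qed

lemma valid_explanations_prototype_learner: "valid_explanations prototype_learner"
  unfolding valid_explanations_def
proof (intro allI impI)
  fix x0 y0 and rs :: "('x \<times> ('x, 'y) feedback) list" and i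
  assume "i < length rs"
  then have "labelled_anchor ` set (prototypes x0 y0 (take i rs)) \<subseteq> observed prototype_learner x0 y0 rs i"
    by (intro anchor_labels_observed) simp
  moreover have "(x0, y0) \<in> observed prototype_learner x0 y0 rs i"
    by (simp add: observed_def)
  ultimately show "(snd (pred prototype_learner x0 y0 rs i), fst (pred prototype_learner x0 y0 rs i))
      \<in> observed prototype_learner x0 y0 rs i"
    using predict_cases[of "(y0, x0)" "prototypes x0 y0 (take i rs)" "fst (rs ! i)"]
    by (auto simp: pred_prototype_learner)
qed

lemma card_less_Suc_filter:
  "card {i. i < Suc n \<and> P i} = card {i. i < n \<and> P i} + (if P n then 1 else 0)"
proof -
  have "{i. i < Suc n \<and> P i} = (if P n then insert n else id) {i. i < n \<and> P i}"
    by (auto simp: less_Suc_eq)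
  then show ?thesis
    by simp
qed

locale separated_cover =
  fixes m :: nat and G :: "nat \<Rightarrow> 'x set" and lab :: "nat \<Rightarrow> 'y"
    and sel :: "'x \<Rightarrow> nat" and phi :: "nat \<Rightarrow> nat \<Rightarrow> 'x \<Rightarrow> bool"
  assumes sel_less: "sel x < m"
    and mem_sel: "x \<in> G (sel x)"
    and phi_true: "i < m \<Longrightarrow> j < m \<Longrightarrow> lab i \<noteq> lab j \<Longrightarrow> z \<in> G i \<Longrightarrow> phi i j z"
    and phi_false: "i < m \<Longrightarrow> j < m \<Longrightarrow> lab i \<noteq> lab j \<Longrightarrow> z \<in> G j \<Longrightarrow> \<not> phi i j z"

lemma separated_cover_if_representation:
  "is_representation Phi m G lab sel phi \<Longrightarrow> separated_cover m G lab sel phi"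
  unfolding is_representation_def separated_cover_def by blast

context separated_cover
begin

definition ruled_out :: "('x, 'y) prototype \<Rightarrow> nat set" where
  "ruled_out p = {b. b < m \<and> lab b \<noteq> lab (sel (anchor p)) \<and>
     (\<lambda>z. \<not> phi b (sel (anchor p)) z) \<in> set (features p)}"

definition honest :: "('x, 'y) prototype \<Rightarrow> bool" where
  "honest p \<longleftrightarrow> plabel p = lab (sel (anchor p)) \<and> (\<forall>z \<in> G (sel (anchor p)). covers p z)"

definition honest_components :: "('x, 'y) prototype list \<Rightarrow> nat set" where
  "honest_components S = (\<lambda>p. sel (anchor p)) ` set (filter honest S)"

definition weight :: "('x, 'y) prototype list \<Rightarrow> nat" where
  "weight S = (\<Sum>p \<leftarrow> S. card (ruled_out p))"

definition potential :: "('x, 'y) prototype list \<Rightarrow> nat" where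
  "potential S = weight S + card (honest_components S)"

lemma ruled_out_subset: "ruled_out p \<subseteq> {..<m} - {sel (anchor p)}"
  by (auto simp: ruled_out_def)

lemma finite_ruled_out [simp]: "finite (ruled_out p)"
  using ruled_out_subset by (rule finite_subset) simp

lemma card_ruled_out_le: "card (ruled_out p) \<le> m - 1"
  using card_mono[OF _ ruled_out_subset, of p] sel_less[of "anchor p"] by simp

lemma honest_components_subset: "honest_components S \<subseteq> {..<m}"
  by (auto simp: honest_components_def sel_less)

lemma finite_honest_components [simp]: "finite (honest_components S)"
  using honest_components_subset by (rule finite_subset) simp

lemma honest_components_snoc:
  "honest_components (S @ [q]) =
     (if honest q then insert (sel (anchor q)) (honest_components S) else honest_components S)"
  by (simp add: honest_components_def)

lemma potential_le: "potential S \<le> length S * (m - 1) + m"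
proof -
  have "weight S \<le> (\<Sum>p \<leftarrow> S. m - 1)"
    unfolding weight_def by (intro sum_list_mono card_ruled_out_le)
  moreover have "card (honest_components S) \<le> m"
    using card_mono[OF _ honest_components_subset, of S] by simp
  ultimately show ?thesis
    by (simp add: potential_def sum_list_triv)
qed

lemma honest_covers: "honest p \<Longrightarrow> sel (anchor p) = sel x \<Longrightarrow> covers p x \<and> plabel p = lab (sel x)"
  using mem_sel by (auto simp: honest_def)

lemma ruled_out_exclude: "ruled_out p \<subseteq> ruled_out (exclude \<phi> p)"
  by (auto simp: ruled_out_def exclude_def)

lemma weight_refine_mono: "weight S \<le> weight (refine \<phi> z S)"
proof (induction S)
  case (Cons p S)
  then show ?case
    using card_mono[OF finite_ruled_out ruled_out_exclude, of p \<phi>] by (simp add: weight_def)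
qed (simp add: weight_def)

lemma card_honest_components_refine:
  "card (honest_components S) \<le> card (honest_components (refine \<phi> z S)) + 1"
proof (cases "\<exists>p \<in> set S. covers p z")
  case True
  then obtain S1 p S2 where "S = S1 @ p # S2" "refine \<phi> z S = S1 @ exclude \<phi> p # S2"
    by (rule refine_split)
  then have "honest_components S \<subseteq> insert (sel (anchor p)) (honest_components (refine \<phi> z S))"
    by (auto simp: honest_components_def)
  then have "card (honest_components S) \<le> card (insert (sel (anchor p)) (honest_components (refine \<phi> z S)))"
    by (intro card_mono) auto
  then show ?thesis
    by (simp add: card_insert_if split: if_splits)
qed (simp add: refine_no_cover)

lemma ruled_out_exclude_strict:
  assumes "covers p z" "lab (sel z) \<noteq> lab (sel (anchor p))"
  shows "ruled_out p \<subset> ruled_out (exclude (phi (sel z) (sel (anchor p))) p)"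
proof -
  have "phi (sel z) (sel (anchor p)) z"
    using assms(2) sel_less mem_sel by (intro phi_true)
  then have "sel z \<notin> ruled_out p"
    using assms(1) by (auto simp: ruled_out_def covers_def)
  moreover have "sel z \<in> ruled_out (exclude (phi (sel z) (sel (anchor p))) p)"
    using assms(2) sel_less by (simp add: ruled_out_def exclude_def)
  ultimately show ?thesis
    using ruled_out_exclude by blast
qed

lemma honest_exclude:
  assumes "honest p" "b < m" "lab b \<noteq> lab (sel (anchor p))"
  shows "honest (exclude (phi b (sel (anchor p))) p)"
  using assms phi_false[OF \<open>b < m\<close> sel_less] by (auto simp: honest_def covers_def exclude_def)

lemma refine_conforming:
  assumes "\<exists>p \<in> set S. covers p z"
    and "lab (sel z) \<noteq> lab (sel (snd (predict d S z)))"
    and "\<phi> = phi (sel z) (sel (snd (predict d S z)))"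
  shows "weight S < weight (refine \<phi> z S)" and "honest_components S \<subseteq> honest_components (refine \<phi> z S)"
proof -
  obtain S1 p S2 where split: "S = S1 @ p # S2" "covers p z" "predict d S z = (plabel p, anchor p)"
    "refine \<phi> z S = S1 @ exclude \<phi> p # S2"
    using assms(1) by (rule refine_split)
  have lab: "lab (sel z) \<noteq> lab (sel (anchor p))" and \<phi>: "\<phi> = phi (sel z) (sel (anchor p))"
    using assms(2,3) split(3) by simp_all
  have "card (ruled_out p) < card (ruled_out (exclude \<phi> p))"
    using ruled_out_exclude_strict[OF split(2) lab] \<phi> by (simp add: psubset_card_mono)
  then show "weight S < weight (refine \<phi> z S)"
    using split(1,4) by (simp add: weight_def)
  have "honest (exclude \<phi> p)" if "honest p"
    using honest_exclude[OF that sel_less lab] \<phi> by simp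
  then show "honest_components S \<subseteq> honest_components (refine \<phi> z S)"
    using split(1,4) by (auto simp: honest_components_def)
qed

lemma weight_admit [simp]: "weight (admit x y S) = weight S"
  by (simp add: admit_def weight_def ruled_out_def)

lemma honest_components_admit: "honest_components S \<subseteq> honest_components (admit x y S)"
  by (auto simp: admit_def honest_components_def)

lemma length_admit: "length (admit x y S) \<le> length S + 1"
  by (simp add: admit_def)

lemma admit_no_cover: "\<forall>p \<in> set S. \<not> covers p x \<Longrightarrow> admit x y S = S @ [Prototype x y []]"
  by (auto simp: admit_def)

lemma admit_correct_label:
  assumes "y = lab (sel x)"
  shows "length (admit x y S) + card (honest_components S) \<le> length S + card (honest_components (admit x y S))"
proof (cases "\<exists>p \<in> set S. covers p x \<and> plabel p = y")
  case False
  then have "sel x \<notin> honest_components S"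
    using assms honest_covers by (auto simp: honest_components_def)
  moreover have "honest (Prototype x y [])"
    using assms by (simp add: honest_def covers_def)
  then have "honest_components (admit x y S) = insert (sel x) (honest_components S)"
    by (simp add: admit_def False honest_components_snoc)
  ultimately show ?thesis
    by (simp add: admit_def False)
qed (simp add: admit_def)

lemma update_conforming:
  fixes S :: "('x, 'y) prototype list" and x :: 'x and y :: 'y and \<phi> :: "'x \<Rightarrow> bool"
  assumes "y = lab (sel x)" "lab (sel x) \<noteq> lab (sel xh)" "\<phi> = phi (sel x) (sel xh)"
    and "xh = snd (predict d S x)"
  defines "S' \<equiv> update S (x, Some (y, \<phi>))"
  shows "potential S < potential S'"
    and "length S' + card (honest_components S) \<le> length S + card (honest_components S')"
proof -
  have S': "S' = admit x y (refine \<phi> x S)"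
    by (simp add: S'_def)
  have admit: "length S' + card (honest_components (refine \<phi> x S))
      \<le> length S + card (honest_components S')"
    using admit_correct_label[OF assms(1), of "refine \<phi> x S"] S' by simp
  have admit_mono: "card (honest_components (refine \<phi> x S)) \<le> card (honest_components S')"
    using honest_components_admit S' by (simp add: card_mono)
  have "weight S < weight S' \<and> card (honest_components S) \<le> card (honest_components (refine \<phi> x S))
    \<or> weight S = weight S' \<and> card (honest_components S) < card (honest_components S')
      \<and> length S' = length S + 1"
  proof (cases "\<exists>p \<in> set S. covers p x")
    case True
    have "card (honest_components S) \<le> card (honest_components (refine \<phi> x S))"
      using refine_conforming(2)[OF True] assms(2-4) by (simp add: card_mono)
    then show ?thesis
      using refine_conforming(1)[OF True] assms(2-4) S' by simp
  next
    case False
    then have no_cover: "\<forall>p \<in> set S. \<not> covers p x"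
      by blast
    then have "S' = admit x y S"
      using refine_no_cover[OF no_cover] S' by simp
    moreover have "length (admit x y S) = length S + 1"
      using admit_no_cover[OF no_cover] by simp
    ultimately show ?thesis
      using admit refine_no_cover[OF no_cover] by simp
  qed
  then show "potential S < potential S'"
    and "length S' + card (honest_components S) \<le> length S + card (honest_components S')"
    using admit admit_mono unfolding potential_def by linarith+
qed

lemma update_mistake:
  fixes S :: "('x, 'y) prototype list" and x :: 'x and y :: 'y and \<phi> :: "'x \<Rightarrow> bool"
  defines "S' \<equiv> update S (x, Some (y, \<phi>))"
  shows "potential S \<le> potential S' + 1" and "length S' \<le> length S + 1"
    and "card (honest_components S) \<le> card (honest_components S') + 1"
proof -
  have "card (honest_components (refine \<phi> x S)) \<le> card (honest_components S')"
    using honest_components_admit by (simp add: S'_def card_mono)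
  then show "card (honest_components S) \<le> card (honest_components S') + 1"
    using card_honest_components_refine[of S \<phi> x] by simp
  then show "potential S \<le> potential S' + 1"
    using weight_refine_mono[of S \<phi> x] by (simp add: potential_def S'_def)
  show "length S' \<le> length S + 1"
    using length_admit[of x y "refine \<phi> x S"] by (simp add: S'_def)
qed

lemma prototypes_invariant:
  fixes rs :: "('x \<times> ('x, 'y) feedback) list" and x0 :: 'x and y0 :: 'y and n :: nat
  assumes "n \<le> length rs"
  defines "S \<equiv> prototypes x0 y0 (take n rs)"
    and "e \<equiv> card {i. i < n \<and> \<not> conforms prototype_learner x0 y0 rs lab sel phi i}"
  shows "card {i. i < n \<and> snd (rs ! i) \<noteq> None} \<le> potential S + 2 * e
    \<and> length S \<le> 1 + card (honest_components S) + 2 * e"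
  using assms(1) unfolding S_def e_def
proof (induction n)
  case 0
  then show ?case by (simp add: prototypes_def)
next
  case (Suc n)
  define S where "S = prototypes x0 y0 (take n rs)"
  define C where "C i \<longleftrightarrow> conforms prototype_learner x0 y0 rs lab sel phi i" for i
  define M where "M = card {i. i < n \<and> snd (rs ! i) \<noteq> None}"
  define E where "E = card {i. i < n \<and> \<not> C i}"
  obtain x fb where r: "rs ! n = (x, fb)"
    by (cases "rs ! n")
  define S' where "S' = update S (x, fb)"
  have IH: "M \<le> potential S + 2 * E" "length S \<le> 1 + card (honest_components S) + 2 * E"
    using Suc unfolding S_def C_def M_def E_def by simp_all
  have bound: "M' \<le> potential S' + 2 * E' \<and> length S' \<le> 1 + card (honest_components S') + 2 * E'"
    if "M' = M + (if fb = None then 0 else 1)" "E' = E + (if C n then 0 else 1)" for M' E'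
  proof (cases fb)
    case None
    then show ?thesis
      using IH that by (simp add: S'_def)
  next
    case (Some fb')
    then obtain y \<phi> where fb: "fb = Some (y, \<phi>)"
      by (cases fb') auto
    show ?thesis
    proof (cases "C n")
      case True
      define xh where "xh = snd (predict (y0, x0) S x)"
      have "y = lab (sel x)" "lab (sel x) \<noteq> lab (sel xh)" "\<phi> = phi (sel x) (sel xh)"
        using True r fb by (simp_all add: C_def conforms_def Let_def pred_prototype_learner S_def xh_def)
      note step = update_conforming[OF this xh_def]
      show ?thesis
        using IH that step True fb unfolding S'_def by simp
    next
      case False
      note step = update_mistake[of S x y \<phi>]
      show ?thesis
        using IH that step False fb unfolding S'_def by simp
    qed
  qed
  have "card {i. i < Suc n \<and> snd (rs ! i) \<noteq> None} = M + (if fb = None then 0 else 1)"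
    unfolding M_def card_less_Suc_filter using r by simp
  moreover have "card {i. i < Suc n \<and> \<not> C i} = E + (if C n then 0 else 1)"
    unfolding E_def card_less_Suc_filter by simp
  moreover have "prototypes x0 y0 (take (Suc n) rs) = S'"
    using Suc.prems r by (simp add: S_def S'_def prototypes_take_Suc)
  ultimately show ?case
    using bound by (simp only: C_def)
qed

lemma mistakes_le:
  fixes rs :: "('x \<times> ('x, 'y) feedback) list" and x0 :: 'x and y0 :: 'y
  defines "e \<equiv> card {i. i < length rs \<and> \<not> conforms prototype_learner x0 y0 rs lab sel phi i}"
  shows "mistakes rs \<le> (m - 1) * (1 + m + 2 * e) + m + 2 * e"
proof -
  define S where "S = prototypes x0 y0 rs"
  have inv: "mistakes rs \<le> potential S + 2 * e" "length S \<le> 1 + m + 2 * e"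
    using prototypes_invariant[of "length rs" rs x0 y0] card_mono[OF _ honest_components_subset, of S]
    by (simp_all add: S_def e_def mistakes_def)
  have "potential S \<le> (1 + m + 2 * e) * (m - 1) + m"
    using potential_le[of S] mult_le_mono1[OF inv(2), of "m - 1"] by linarith
  with inv(1) show ?thesis
    by (simp add: mult.commute)
qed

lemma mistakes_le_nonconforming_if_single_component:
  assumes "m = 1"
  shows "mistakes rs \<le> card {i. i < length rs \<and> \<not> conforms L x0 y0 rs lab sel phi i}"
  unfolding mistakes_def
proof (rule card_mono)
  have "sel z = 0" for z
    using sel_less[of z] assms by simp
  then have "\<not> conforms L x0 y0 rs lab sel phi i" if "snd (rs ! i) \<noteq> None" for i
    using that by (auto simp: conforms_def Let_def split: option.splits)
  then show "{i. i < length rs \<and> snd (rs ! i) \<noteq> None}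
      \<subseteq> {i. i < length rs \<and> \<not> conforms L x0 y0 rs lab sel phi i}"
    by blast
qed simp

lemma mistakes_le_UB:
  assumes "card {i. i < length rs \<and> \<not> conforms prototype_learner x0 y0 rs lab sel phi i} \<le> k"
  shows "mistakes rs \<le> 3 * UB m k"
proof (cases "m = 1")
  case True
  have "mistakes rs \<le> k"
    using mistakes_le_nonconforming_if_single_component[OF True, of rs prototype_learner x0 y0] assms
    by linarith
  then show ?thesis
    using True by (simp add: UB_def)
next
  case False
  then have "2 \<le> m"
    using sel_less[of x0] by linarith
  then obtain t where t: "m = 2 + t"
    using nat_le_iff_add by blast
  let ?e = "card {i. i < length rs \<and> \<not> conforms prototype_learner x0 y0 rs lab sel phi i}"
  have "mistakes rs \<le> (m - 1) * (1 + m + 2 * ?e) + m + 2 * ?e"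
    by (rule mistakes_le)
  also have "\<dots> \<le> (m - 1) * (1 + m + 2 * k) + m + 2 * k"
    using assms by (intro add_mono mult_le_mono2) simp_all
  also have "\<dots> \<le> 3 * UB m k"
    unfolding UB_def t by (simp add: algebra_simps)
  finally show ?thesis .
qed

end

lemma three_times_le_log_bound: "3 * real U \<le> 32 * real U * (log 2 (8 * real U))\<^sup>2"
proof (cases "U = 0")
  case False
  have "log 2 8 \<le> log 2 (8 * real U)"
    using False by simp
  then have "3 \<le> log 2 (8 * real U)"
    by (simp add: log_pow_cancel[of 2 3, simplified])
  then have "1 \<le> (log 2 (8 * real U))\<^sup>2"
    by (simp add: one_le_power)
  then show ?thesis
    using mult_left_mono[of 1 "(log 2 (8 * real U))\<^sup>2" "32 * real U"] by simp
qed simp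

theorem theorem2:
  "\<exists>L :: ('x, 'y :: finite) learner. valid_explanations L \<and>
     (\<forall>Phi m k x0 y0 rs. neg_closed Phi \<and> consistent_stream Phi m k L x0 y0 rs \<longrightarrow>
        real (mistakes rs) \<le> 32 * real (UB m k) * (log 2 (8 * real (UB m k)))\<^sup>2)"
proof (intro exI[of _ prototype_learner] conjI valid_explanations_prototype_learner allI impI)
  fix Phi m k x0 y0 and rs :: "('x \<times> ('x, 'y) feedback) list"
  assume "neg_closed Phi \<and> consistent_stream Phi m k prototype_learner x0 y0 rs"
  then obtain G lab sel phi where rep: "is_representation Phi m G lab sel phi"
    and exceptions: "num_exceptions prototype_learner x0 y0 rs lab sel phi \<le> k"
    unfolding consistent_stream_def by blast
  interpret separated_cover m G lab sel phi
    using rep by (rule separated_cover_if_representation)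
  have "mistakes rs \<le> 3 * UB m k"
    using exceptions by (intro mistakes_le_UB[of rs x0 y0]) (simp add: num_exceptions_def)
  then show "real (mistakes rs) \<le> 32 * real (UB m k) * (log 2 (8 * real (UB m k)))\<^sup>2"
    using three_times_le_log_bound[of "UB m k"] by linarith
qed

end
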